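(* Let $w\in S_k$ and let $\mathbf b=(b_1,\dots,b_{k-1})$ be non-negative integers with $\sum_i b_i=\ell(w)$. Let $F$ be the set of inversions of $w$, for $f=(i,j)\in F$ put $L(f)=\sum_{r=i}^{j-1}v_r$, and $L_w=\prod_{f\in F}L(f)$. Then: (1) the coefficient of $v^{\mathbf b}$ in $R_w$ is non-zero if and only if the coefficient of $v^{\mathbf b}$ in $L_w$ is non-zero; (2) for $1\le s\le t\le k-1$ let $K_{s,t}$ be the number of inversions $(i,j)$ of $w$ with $s\le i<j\le t+1$; then the coefficient of $v^{\mathbf b}$ in $R_w$ is non-zero if and only if $\sum_{i=s}^t b_i\ge K_{s,t}$ for all $1\le s\le t\le k-1$.
   Context: Fix $k\ge 2$. Permutations $u\in S_k$ are written in one-line notation $u=(u(1),\dots,u(k))$. An inversion of $u$ is a pair of positions $(i,j)$ with $i<j$ and $u(i)>u(j)$; $\ell(u)$ is the number of inversions. For $1\le n<m\le k$ let $u\circ(n\,m)$ denote the permutation obtained from $u$ by swapping the entries in positions $n$ and $m$. We say $u'$ covers $u$ if $u'=u\circ(n\,m)$ for some $n<m$ and $\ell(u')=\ell(u)+1$; the weight of this cover is $v_n+v_{n+1}+\dots+v_{m-1}$. For $w\in S_k$, $R_w\in\mathbb Z[v_1,\dots,v_{k-1}]$ is the sum, over all chains $\mathrm{id}=u_0,u_1,\dots,u_{\ell(w)}=w$ in which each $u_{i+1}$ covers $u_i$, of the product of the weights of the covers $u_i\to u_{i+1}$. $v^{\mathbf b}=v_1^{b_1}\cdots v_{k-1}^{b_{k-1}}$.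 *)

theory Defs
  imports Main "HOL-Library.Poly_Mapping" "HOL-Combinatorics.Permutations"
    "HOL-Combinatorics.Transposition"
begin

text \<open>Polynomials in Z[v_1,...,v_{k-1}]: finitely supported maps from exponent
  vectors (nat =>0 nat) to integer coefficients. The variable v_r is the
  monomial with exponent vector single r 1.\<close>
type_synonym mpoly = "(nat \<Rightarrow>\<^sub>0 nat) \<Rightarrow>\<^sub>0 int"

definition var :: "nat \<Rightarrow> mpoly" where
  "var r = Poly_Mapping.single (Poly_Mapping.single r 1) 1"

definition coeff :: "mpoly \<Rightarrow> (nat \<Rightarrow>\<^sub>0 nat) \<Rightarrow> int" where
  "coeff p b = Poly_Mapping.lookup p b"

text \<open>Permutations of S_k are functions permuting {1..k} (one-line notation u(i)).\<close>
definition inversions :: "nat \<Rightarrow> (nat \<Rightarrow> nat) \<Rightarrow> (nat \<times> nat) set" where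
  "inversions k u = {(i, j). 1 \<le> i \<and> i < j \<and> j \<le> k \<and> u i > u j}"

definition len :: "nat \<Rightarrow> (nat \<Rightarrow> nat) \<Rightarrow> nat" where
  "len k u = card (inversions k u)"

definition swap_pos :: "(nat \<Rightarrow> nat) \<Rightarrow> nat \<Rightarrow> nat \<Rightarrow> (nat \<Rightarrow> nat)" where
  "swap_pos u n m = u \<circ> transpose n m"

definition covers_by :: "nat \<Rightarrow> (nat \<Rightarrow> nat) \<Rightarrow> (nat \<Rightarrow> nat) \<Rightarrow> nat \<Rightarrow> nat \<Rightarrow> bool" where
  "covers_by k u u' n m \<longleftrightarrow> 1 \<le> n \<and> n < m \<and> m \<le> k \<and> u' = swap_pos u n m
      \<and> len k u' = len k u + 1"

definition covers :: "nat \<Rightarrow> (nat \<Rightarrow> nat) \<Rightarrow> (nat \<Rightarrow> nat) \<Rightarrow> bool" where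
  "covers k u u' \<longleftrightarrow> (\<exists>n m. covers_by k u u' n m)"

text \<open>Weight v_n + ... + v_{m-1} of the cover u -> u' (the pair (n,m) is unique).\<close>
definition cover_weight :: "nat \<Rightarrow> (nat \<Rightarrow> nat) \<Rightarrow> (nat \<Rightarrow> nat) \<Rightarrow> mpoly" where
  "cover_weight k u u' =
     (let (n, m) = (THE p. covers_by k u u' (fst p) (snd p)) in (\<Sum>r\<in>{n..<m}. var r))"

definition chains :: "nat \<Rightarrow> (nat \<Rightarrow> nat) \<Rightarrow> (nat \<Rightarrow> nat) list set" where
  "chains k w = {us. length us = len k w + 1 \<and> us ! 0 = id \<and> us ! len k w = w
      \<and> (\<forall>i < len k w. covers k (us ! i) (us ! Suc i))}"

definition R :: "nat \<Rightarrow> (nat \<Rightarrow> nat) \<Rightarrow> mpoly" where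
  "R k w = (\<Sum>us\<in>chains k w. \<Prod>i<len k w. cover_weight k (us ! i) (us ! Suc i))"

definition Lf :: "nat \<times> nat \<Rightarrow> mpoly" where
  "Lf f = (\<Sum>r\<in>{fst f..<snd f}. var r)"

definition Lw :: "nat \<Rightarrow> (nat \<Rightarrow> nat) \<Rightarrow> mpoly" where
  "Lw k w = (\<Prod>f\<in>inversions k w. Lf f)"

definition K :: "nat \<Rightarrow> (nat \<Rightarrow> nat) \<Rightarrow> nat \<Rightarrow> nat \<Rightarrow> nat" where
  "K k w s t = card {(i, j). (i, j) \<in> inversions k w \<and> s \<le> i \<and> j \<le> t + 1}"

end

theory Submission
  imports Defs
begin

text \<open>A maximal chain from id to w has as weight a product of len w interval sums
  L(n, m) = v_n + ... + v_{m-1}, one for each cover u \<rightarrow> u \<circ> (n m), so all coefficients are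
  non-negative. Undoing, one at a time, inversions (n, m) with w(n) = w(m) + 1 removes exactly
  the inversion (n, m) each time, which yields a chain of weight exactly L_w; hence every
  monomial of L_w occurs in R_w.

  A monomial v^b of a chain weight picks one variable v_r, n \<le> r < m, from each cover
  u \<rightarrow> u \<circ> (n m). A Bruhat cover raises the number of inversions inside a window of positions
  [s, t+1] by at most one, and only if s \<le> n and m \<le> t+1; counting along the chain gives
  K(s,t) \<le> b_s + ... + b_t.

  Conversely these window inequalities are Hall's condition for distributing the variables
  of v^b over the inversions, one variable v_r with i \<le> r < j to each inversion (i, j);
  greedily, the smallest variable occurring in b goes to the inversion containing it that
  ends first. Such a distribution is a monomial of L_w.\<close>

section \<open>Coefficients of products of variables\<close>

lemma lookup_single_one_mult:
  "Poly_Mapping.lookup (Poly_Mapping.single a (1::int) * g) c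
     = (\<Sum>q. Poly_Mapping.lookup g q when c = a + q)"
proof -
  have "\<And>a'. (if a' = a then 1 else 0) * (\<Sum>q. Poly_Mapping.lookup g q when c = a' + q)
      = (if a' = a then (\<Sum>q. Poly_Mapping.lookup g q when c = a' + q) else 0)" by simp
  then show ?thesis by (simp add: lookup_mult lookup_single when_def)
qed

lemma coeff_var_mult_add_single:
  "coeff (var r * g) (c + Poly_Mapping.single r 1) = coeff g c"
proof -
  have "\<And>q. (c + Poly_Mapping.single r 1 = Poly_Mapping.single r 1 + q) = (q = c)"
    by (metis add.commute add_left_cancel)
  then show ?thesis by (simp add: coeff_def var_def lookup_single_one_mult)
qed

lemma coeff_var_mult_eq_0:
  assumes "Poly_Mapping.lookup b r = 0"
  shows "coeff (var r * g) b = 0"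
proof -
  have "b \<noteq> Poly_Mapping.single r 1 + q" for q
    using assms by (auto simp: lookup_add)
  then show ?thesis by (simp add: coeff_def var_def lookup_single_one_mult)
qed

lemma coeff_var_mult:
  assumes "Poly_Mapping.lookup b r \<noteq> 0"
  shows "coeff (var r * g) b = coeff g (b - Poly_Mapping.single r 1)"
proof -
  have "b = (b - Poly_Mapping.single r 1) + Poly_Mapping.single r 1"
    using assms by (intro poly_mapping_eqI) (auto simp: lookup_add lookup_minus lookup_single when_def)
  then show ?thesis by (metis coeff_var_mult_add_single)
qed

lemma lookup_minus_single_sum:
  fixes b :: "nat \<Rightarrow>\<^sub>0 nat"
  assumes "Poly_Mapping.lookup b r \<noteq> 0" "finite A"
  shows "(\<Sum>q\<in>A. Poly_Mapping.lookup b q)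
       = (\<Sum>q\<in>A. Poly_Mapping.lookup (b - Poly_Mapping.single r 1) q) + (if r \<in> A then 1 else 0)"
proof -
  have "(\<Sum>q\<in>A. Poly_Mapping.lookup b q)
      = (\<Sum>q\<in>A. Poly_Mapping.lookup (b - Poly_Mapping.single r 1) q + (if q = r then 1 else 0))"
    using assms(1) by (intro sum.cong refl) (auto simp: lookup_minus lookup_single_not_eq)
  then show ?thesis using assms(2) by (simp add: sum.distrib)
qed

definition nonneg_coeffs :: "mpoly \<Rightarrow> bool" where
  "nonneg_coeffs p \<longleftrightarrow> (\<forall>b. coeff p b \<ge> 0)"

lemma nonneg_coeffs_var: "nonneg_coeffs (var r)"
  by (simp add: nonneg_coeffs_def coeff_def var_def lookup_single when_def)

lemma nonneg_coeffs_sum: "(\<And>x. x \<in> A \<Longrightarrow> nonneg_coeffs (f x)) \<Longrightarrow> nonneg_coeffs (sum f A)"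
  by (simp add: nonneg_coeffs_def coeff_def lookup_sum sum_nonneg)

lemma nonneg_coeffs_mult: "nonneg_coeffs p \<Longrightarrow> nonneg_coeffs q \<Longrightarrow> nonneg_coeffs (p * q)"
  unfolding nonneg_coeffs_def coeff_def lookup_mult
  by (auto intro!: mult_nonneg_nonneg sum_nonneg simp: Sum_any.expand_set when_def)

lemma nonneg_coeffs_prod: "(\<And>x. x \<in> A \<Longrightarrow> nonneg_coeffs (f x)) \<Longrightarrow> nonneg_coeffs (prod f A)"
proof (induction A rule: infinite_finite_induct)
  case (insert x F) then show ?case by (simp add: nonneg_coeffs_mult)
qed (simp_all add: nonneg_coeffs_def coeff_def lookup_one when_def)

lemma nonneg_coeffs_Lf: "nonneg_coeffs (Lf f)"
  unfolding Lf_def by (intro nonneg_coeffs_sum nonneg_coeffs_var)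

lemma coeff_le_coeff_sum:
  assumes "finite A" "x \<in> A" "\<And>y. y \<in> A \<Longrightarrow> nonneg_coeffs (f y)"
  shows "coeff (f x) b \<le> coeff (sum f A) b"
  unfolding coeff_def lookup_sum
  using assms by (intro member_le_sum) (auto simp: nonneg_coeffs_def coeff_def)

section \<open>Inversions inside a window of positions\<close>

text \<open>Integer-valued, so that the effect of a transposition can be written as a difference.\<close>
definition inverted :: "(nat \<Rightarrow> nat) \<Rightarrow> nat \<Rightarrow> nat \<Rightarrow> int" where
  "inverted u p q = (if p < q \<and> u q < u p then 1 else 0)"

definition inv_count :: "nat set \<Rightarrow> (nat \<Rightarrow> nat) \<Rightarrow> int" where
  "inv_count W u = (\<Sum>p\<in>W. \<Sum>q\<in>W. inverted u p q)"

definition crossing :: "(nat \<Rightarrow> nat) \<Rightarrow> nat \<Rightarrow> nat \<Rightarrow> nat \<Rightarrow> int" where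
  "crossing u x v q = (if x < q \<and> u q < v then 1 else 0) + (if q < x \<and> v < u q then 1 else 0)"

definition crossings :: "nat set \<Rightarrow> (nat \<Rightarrow> nat) \<Rightarrow> nat \<Rightarrow> nat \<Rightarrow> int" where
  "crossings V u x v = (\<Sum>q\<in>V. crossing u x v q)"

lemma inv_count_insert:
  assumes "finite V" "x \<notin> V"
  shows "inv_count (insert x V) u = inv_count V u + crossings V u x (u x)"
proof -
  have "inv_count (insert x V) u
      = (\<Sum>q\<in>insert x V. inverted u x q) + (\<Sum>p\<in>V. \<Sum>q\<in>insert x V. inverted u p q)"
    using assms by (simp add: inv_count_def)
  also have "\<dots> = (\<Sum>q\<in>V. inverted u x q) + (\<Sum>p\<in>V. inverted u p x + (\<Sum>q\<in>V. inverted u p q))"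
    using assms by (simp add: inverted_def)
  also have "\<dots> = inv_count V u + crossings V u x (u x)"
    by (simp add: inv_count_def crossings_def crossing_def sum.distrib inverted_def)
  finally show ?thesis .
qed

lemma crossings_insert:
  "finite V \<Longrightarrow> y \<notin> V \<Longrightarrow> crossings (insert y V) u x v = crossings V u x v + crossing u x v y"
  by (simp add: crossings_def)

lemma inv_count_cong: "(\<And>p. p \<in> W \<Longrightarrow> u p = u' p) \<Longrightarrow> inv_count W u = inv_count W u'"
  unfolding inv_count_def inverted_def by (intro sum.cong refl) auto

lemma crossings_cong: "(\<And>p. p \<in> W \<Longrightarrow> u p = u' p) \<Longrightarrow> crossings W u x v = crossings W u' x v"
  unfolding crossings_def crossing_def by (intro sum.cong refl) auto

lemma inv_count_id: "inv_count W (\<lambda>x. x) = 0"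
proof -
  have "inverted (\<lambda>x. x) p q = 0" for p q by (auto simp: inverted_def)
  then show ?thesis by (simp add: inv_count_def)
qed

lemma inv_count_eq_card:
  assumes "1 \<le> a" "c \<le> k"
  shows "inv_count {a..c} u = int (card {(i, j). (i, j) \<in> inversions k u \<and> a \<le> i \<and> j \<le> c})"
proof -
  let ?P = "\<lambda>x. fst x < snd x \<and> u (snd x) < u (fst x)"
  have "{(i, j). (i, j) \<in> inversions k u \<and> a \<le> i \<and> j \<le> c} = {x \<in> {a..c} \<times> {a..c}. ?P x}"
    using assms by (auto simp: inversions_def)
  moreover have "inv_count {a..c} u = (\<Sum>x\<in>{a..c} \<times> {a..c}. if ?P x then 1 else 0)"
    by (simp add: inv_count_def inverted_def sum.cartesian_product case_prod_beta)
  ultimately show ?thesis by (simp add: sum.inter_filter[symmetric])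
qed

lemma len_eq_inv_count: "int (len k u) = inv_count {1..k} u"
proof -
  have "inversions k u = {(i, j). (i, j) \<in> inversions k u \<and> 1 \<le> i \<and> j \<le> k}"
    by (auto simp: inversions_def)
  then show ?thesis using inv_count_eq_card[of 1 k k u] by (simp add: len_def)
qed

lemma K_eq_inv_count: "1 \<le> s \<Longrightarrow> t + 1 \<le> k \<Longrightarrow> int (K k w s t) = inv_count {s..t+1} w"
  using inv_count_eq_card[of s "t + 1" k w] by (simp add: K_def)

section \<open>Transposing two positions\<close>

definition bruhat_cover_pair :: "(nat \<Rightarrow> nat) \<Rightarrow> nat \<Rightarrow> nat \<Rightarrow> bool" where
  "bruhat_cover_pair u n m \<longleftrightarrow> u n < u m \<and> (\<forall>q. n < q \<and> q < m \<longrightarrow> \<not> (u n < u q \<and> u q < u m))"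

locale position_swap =
  fixes u :: "nat \<Rightarrow> nat" and n m :: nat
  assumes inj: "inj u" and less: "n < m"
begin

abbreviation "u' \<equiv> swap_pos u n m"

lemma swapped_left [simp]: "u' n = u m"
  and swapped_right [simp]: "u' m = u n"
  and swapped_other [simp]: "q \<noteq> n \<Longrightarrow> q \<noteq> m \<Longrightarrow> u' q = u q"
  by (simp_all add: swap_pos_def)

definition change :: "nat \<Rightarrow> int" where
  "change q = crossing u n (u m) q + crossing u m (u n) q - crossing u n (u n) q - crossing u m (u m) q"

lemma change_outside: "q < n \<or> m < q \<Longrightarrow> change q = 0"
  using less unfolding change_def crossing_def by auto

lemma change_between:
  assumes "n < q" "q < m"
  shows "change q =
    (if u n < u q \<and> u q < u m then 2 else if u m < u q \<and> u q < u n then -2 else 0)"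
proof -
  have "u q \<noteq> u n" "u q \<noteq> u m" using inj assms by (auto dest: injD)
  then show ?thesis using assms by (auto simp: change_def crossing_def)
qed

lemma inv_count_swap_both:
  assumes "finite W" "n \<in> W" "m \<in> W"
  shows "inv_count W u' - inv_count W u = (\<Sum>q\<in>W - {n, m}. change q)
     + (if u n < u m then 1 else 0) - (if u m < u n then 1 else 0)"
proof -
  define V where "V = W - {n, m}"
  have W: "W = insert n (insert m V)" and V: "finite V" "n \<notin> V" "m \<notin> V" "n \<notin> insert m V"
    using assms less by (auto simp: V_def)
  have agree: "\<And>p. p \<in> V \<Longrightarrow> u' p = u p" by (simp add: V_def)
  have "inv_count W u = inv_count V u + crossings V u m (u m) + crossings V u n (u n)
      + (if u m < u n then 1 else 0)"
    unfolding W using V less by (simp add: inv_count_insert crossings_insert crossing_def)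
  moreover have "inv_count W u' = inv_count V u + crossings V u m (u n) + crossings V u n (u m)
      + (if u n < u m then 1 else 0)"
    unfolding W using V less inv_count_cong[OF agree] crossings_cong[OF agree]
    by (simp add: inv_count_insert crossings_insert crossing_def)
  ultimately show ?thesis
    by (simp add: V_def crossings_def change_def sum.distrib sum_subtractf)
qed

lemma inv_count_swap_left:
  assumes "finite W" "n \<in> W" "m \<notin> W"
  shows "inv_count W u' - inv_count W u = (\<Sum>q\<in>W - {n}. crossing u n (u m) q - crossing u n (u n) q)"
proof -
  define V where "V = W - {n}"
  have W: "W = insert n V" and V: "finite V" "n \<notin> V" using assms by (auto simp: V_def)
  have agree: "\<And>p. p \<in> V \<Longrightarrow> u' p = u p" using assms by (intro swapped_other) (auto simp: V_def)
  have "inv_count W u' - inv_count W u = crossings V u' n (u' n) - crossings V u n (u n)"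
    unfolding W using V inv_count_cong[OF agree] by (simp add: inv_count_insert)
  also have "\<dots> = crossings V u n (u m) - crossings V u n (u n)"
    using crossings_cong[OF agree, where x = n and v = "u m"] by simp
  finally show ?thesis by (simp add: crossings_def V_def sum_subtractf)
qed

lemma inv_count_swap_right:
  assumes "finite W" "m \<in> W" "n \<notin> W"
  shows "inv_count W u' - inv_count W u = (\<Sum>q\<in>W - {m}. crossing u m (u n) q - crossing u m (u m) q)"
proof -
  define V where "V = W - {m}"
  have W: "W = insert m V" and V: "finite V" "m \<notin> V" using assms by (auto simp: V_def)
  have agree: "\<And>p. p \<in> V \<Longrightarrow> u' p = u p" using assms by (intro swapped_other) (auto simp: V_def)
  have "inv_count W u' - inv_count W u = crossings V u' m (u' m) - crossings V u m (u m)"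
    unfolding W using V inv_count_cong[OF agree] by (simp add: inv_count_insert)
  also have "\<dots> = crossings V u m (u n) - crossings V u m (u m)"
    using crossings_cong[OF agree, where x = m and v = "u n"] by simp
  finally show ?thesis by (simp add: crossings_def V_def sum_subtractf)
qed

lemma inv_count_swap_outside: "n \<notin> W \<Longrightarrow> m \<notin> W \<Longrightarrow> inv_count W u' = inv_count W u"
  by (intro inv_count_cong swapped_other) auto

lemma bruhat_cover_pair_if_inv_count_succ:
  assumes "1 \<le> n" "m \<le> k" "inv_count {1..k} u' = inv_count {1..k} u + 1"
  shows "bruhat_cover_pair u n m"
proof -
  have diff: "inv_count {1..k} u' - inv_count {1..k} u = (\<Sum>q\<in>{1..k} - {n, m}. change q)
     + (if u n < u m then 1 else 0) - (if u m < u n then 1 else 0)"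
    using assms less by (intro inv_count_swap_both) auto
  have "u n \<noteq> u m" using inj less by (auto dest: injD)
  show ?thesis
  proof (cases "u n < u m")
    case False
    then have "change q \<le> 0" if "q \<in> {1..k} - {n, m}" for q
      using that \<open>u n \<noteq> u m\<close> change_outside[of q] change_between[of q] by (cases "q < n \<or> m < q") auto
    then have "(\<Sum>q\<in>{1..k} - {n, m}. change q) \<le> 0" by (intro sum_nonpos)
    then show ?thesis using diff assms(3) False \<open>u n \<noteq> u m\<close> by simp
  next
    case True
    have nonneg: "change q \<ge> 0" if "q \<in> {1..k} - {n, m}" for q
      using that True change_outside[of q] change_between[of q] by (cases "q < n \<or> m < q") auto
    have "(\<Sum>q\<in>{1..k} - {n, m}. change q) = 0" using diff assms(3) True by simp
    then have zero: "change q = 0" if "q \<in> {1..k} - {n, m}" for q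
      using sum_nonneg_eq_0_iff[of "{1..k} - {n, m}" change] nonneg that by blast
    have "\<not> (u n < u q \<and> u q < u m)" if "n < q" "q < m" for q
      using zero[of q] change_between[OF that] that assms(1,2) by auto
    then show ?thesis using True by (auto simp: bruhat_cover_pair_def)
  qed
qed

lemma inv_count_window_bruhat_cover:
  assumes "bruhat_cover_pair u n m"
  shows "inv_count {s..c} u' \<le> inv_count {s..c} u + of_bool (s \<le> n \<and> m \<le> c)"
proof -
  have up: "u n < u m" and gap: "\<And>q. n < q \<Longrightarrow> q < m \<Longrightarrow> \<not> (u n < u q \<and> u q < u m)"
    using assms by (auto simp: bruhat_cover_pair_def)
  have distinct: "u q \<noteq> u p" if "q \<noteq> p" for q p using inj that by (auto dest: injD)
  consider "n \<in> {s..c}" "m \<in> {s..c}" | "n \<in> {s..c}" "m \<notin> {s..c}"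
    | "m \<in> {s..c}" "n \<notin> {s..c}" | "n \<notin> {s..c}" "m \<notin> {s..c}" by blast
  then show ?thesis
  proof cases
    case 1
    have "change q = 0" if "q \<in> {s..c} - {n, m}" for q
      using that change_outside[of q] change_between[of q] up gap[of q]
      by (cases "q < n \<or> m < q") auto
    then show ?thesis using inv_count_swap_both[OF _ 1] 1 up by simp
  next
    case 2
    have "crossing u n (u m) q - crossing u n (u n) q \<le> 0" if "q \<in> {s..c} - {n}" for q
      using that 2 less up gap[of q] distinct[of q n] by (auto simp: crossing_def)
    then have "(\<Sum>q\<in>{s..c} - {n}. crossing u n (u m) q - crossing u n (u n) q) \<le> 0"
      by (rule sum_nonpos)
    then show ?thesis using inv_count_swap_left[OF _ 2] by simp
  next
    case 3
    have "crossing u m (u n) q - crossing u m (u m) q \<le> 0" if "q \<in> {s..c} - {m}" for q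
      using that 3 less up gap[of q] distinct[of q m] by (auto simp: crossing_def)
    then have "(\<Sum>q\<in>{s..c} - {m}. crossing u m (u n) q - crossing u m (u m) q) \<le> 0"
      by (rule sum_nonpos)
    then show ?thesis using inv_count_swap_right[OF _ 3] by simp
  next
    case 4
    then show ?thesis using inv_count_swap_outside by simp
  qed
qed

end

section \<open>Chains of covers\<close>

lemma swap_pos_permutes:
  assumes "u permutes {1..k}" "1 \<le> n" "n < m" "m \<le> k"
  shows "swap_pos u n m permutes {1..k}"
  unfolding swap_pos_def using assms by (intro permutes_compose permutes_swap_id) auto

lemma inv_count_window_covers_by:
  assumes "u permutes {1..k}" "covers_by k u u' n m"
  shows "inv_count {s..c} u' \<le> inv_count {s..c} u + of_bool (s \<le> n \<and> m \<le> c)"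
proof -
  have nm: "1 \<le> n" "n < m" "m \<le> k" and u': "u' = swap_pos u n m"
    and "len k u' = len k u + 1"
    using assms(2) by (auto simp: covers_by_def)
  interpret position_swap u n m
    using permutes_inj[OF assms(1)] nm by unfold_locales
  have "inv_count {1..k} (swap_pos u n m) = inv_count {1..k} u + 1"
    using \<open>len k u' = len k u + 1\<close> len_eq_inv_count[of k u] len_eq_inv_count[of k u'] u' by simp
  then have "bruhat_cover_pair u n m"
    using nm by (intro bruhat_cover_pair_if_inv_count_succ)
  then show ?thesis unfolding u' by (rule inv_count_window_bruhat_cover)
qed

lemma covers_by_unique:
  assumes "u permutes {1..k}" "covers_by k u u' n m" "covers_by k u u' n' m'"
  shows "n' = n \<and> m' = m"
proof -
  have "u \<circ> transpose n m = u \<circ> transpose n' m'"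
    using assms by (simp add: covers_by_def swap_pos_def)
  then have eq: "transpose n m x = transpose n' m' x" for x
    using permutes_inj[OF assms(1)] by (metis comp_apply injD)
  have "n < m" "n' < m'" using assms by (auto simp: covers_by_def)
  moreover have "transpose n' m' n = m" "transpose n' m' m = n" using eq[of n] eq[of m] by simp_all
  ultimately show ?thesis by (auto simp: transpose_def split: if_splits)
qed

lemma cover_weight_eq:
  assumes "u permutes {1..k}" "covers_by k u u' n m"
  shows "cover_weight k u u' = Lf (n, m)"
proof -
  have "(THE p. covers_by k u u' (fst p) (snd p)) = (n, m)"
  proof (rule the_equality)
    fix p assume "covers_by k u u' (fst p) (snd p)"
    then show "p = (n, m)" using covers_by_unique[OF assms] by (simp add: prod_eq_iff)
  qed (use assms(2) in simp)
  then show ?thesis by (simp add: cover_weight_def Lf_def)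
qed

lemma chain_permutes:
  assumes "us \<in> chains k w" "i \<le> len k w"
  shows "(us ! i) permutes {1..k}"
  using assms(2)
proof (induction i)
  case 0
  then show ?case using assms(1) permutes_id by (simp add: chains_def id_def)
next
  case (Suc i)
  then have "covers k (us ! i) (us ! Suc i)" using assms(1) by (simp add: chains_def)
  then obtain n m where "covers_by k (us ! i) (us ! Suc i) n m" by (auto simp: covers_def)
  then show ?case using Suc swap_pos_permutes[of "us ! i" k n m] by (auto simp: covers_by_def)
qed

lemma chain_step:
  assumes "us \<in> chains k w" "i < len k w"
  obtains n m where "covers_by k (us ! i) (us ! Suc i) n m"
    and "cover_weight k (us ! i) (us ! Suc i) = Lf (n, m)"
proof -
  obtain n m where "covers_by k (us ! i) (us ! Suc i) n m"
    using assms by (auto simp: chains_def covers_def)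
  moreover have "(us ! i) permutes {1..k}" using chain_permutes assms by simp
  ultimately show thesis using that cover_weight_eq by blast
qed

lemma finite_chains: "finite (chains k w)"
proof (rule finite_subset)
  show "chains k w \<subseteq> {us. set us \<subseteq> {p. p permutes {1..k}} \<and> length us = len k w + 1}"
  proof
    fix us assume us: "us \<in> chains k w"
    then have "length us = len k w + 1" by (simp add: chains_def)
    moreover have "set us \<subseteq> {p. p permutes {1..k}}"
      using chain_permutes[OF us] \<open>length us = len k w + 1\<close> by (auto simp: in_set_conv_nth)
    ultimately show "us \<in> {us. set us \<subseteq> {p. p permutes {1..k}} \<and> length us = len k w + 1}"
      by simp
  qed
  show "finite {us. set us \<subseteq> {p. p permutes {1..k}} \<and> length us = len k w + 1}"
    by (intro finite_lists_length_eq finite_permutations) simp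
qed

definition chain_weight :: "nat \<Rightarrow> (nat \<Rightarrow> nat) \<Rightarrow> (nat \<Rightarrow> nat) list \<Rightarrow> mpoly" where
  "chain_weight k w us = (\<Prod>i<len k w. cover_weight k (us ! i) (us ! Suc i))"

lemma R_eq_sum_chain_weight: "R k w = (\<Sum>us\<in>chains k w. chain_weight k w us)"
  by (simp add: R_def chain_weight_def)

lemma nonneg_coeffs_chain_weight:
  assumes "us \<in> chains k w"
  shows "nonneg_coeffs (chain_weight k w us)"
  unfolding chain_weight_def
proof (intro nonneg_coeffs_prod)
  fix i assume "i \<in> {..<len k w}"
  then have "i < len k w" by simp
  then obtain n m where "covers_by k (us ! i) (us ! Suc i) n m"
    "cover_weight k (us ! i) (us ! Suc i) = Lf (n, m)"
    by (rule chain_step[OF assms])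
  then show "nonneg_coeffs (cover_weight k (us ! i) (us ! Suc i))" by (simp add: nonneg_coeffs_Lf)
qed

section \<open>Necessity of the window inequalities\<close>

lemma coeff_prod_sum_var_nonzero_imp_choice:
  fixes N :: nat and S :: "nat \<Rightarrow> nat set"
  assumes "coeff (\<Prod>i<N. \<Sum>r\<in>S i. var r) b \<noteq> 0"
  shows "\<exists>c. (\<forall>i<N. c i \<in> S i) \<and> (\<forall>q. Poly_Mapping.lookup b q = (\<Sum>i<N. of_bool (c i = q)))"
  using assms
proof (induction N arbitrary: b)
  case 0
  then have "b = 0" by (simp add: coeff_def lookup_one when_def split: if_splits)
  then show ?case by simp
next
  case (Suc N)
  let ?P = "\<Prod>i<N. \<Sum>r\<in>S i. var r"
  have "(\<Prod>i<Suc N. \<Sum>r\<in>S i. var r) = (\<Sum>r\<in>S N. var r * ?P)"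
    by (simp add: sum_distrib_right mult.commute)
  then have "(\<Sum>r\<in>S N. coeff (var r * ?P) b) \<noteq> 0"
    using Suc.prems by (simp add: coeff_def lookup_sum)
  then obtain r where r: "r \<in> S N" "coeff (var r * ?P) b \<noteq> 0"
    by (rule sum.not_neutral_contains_not_neutral)
  then have br: "Poly_Mapping.lookup b r \<noteq> 0" using coeff_var_mult_eq_0 by blast
  then have "coeff ?P (b - Poly_Mapping.single r 1) \<noteq> 0" using r(2) coeff_var_mult by simp
  from Suc.IH[OF this] obtain c where c: "\<forall>i<N. c i \<in> S i"
    "\<forall>q. Poly_Mapping.lookup (b - Poly_Mapping.single r 1) q = (\<Sum>i<N. of_bool (c i = q))"
    by blast
  have "Poly_Mapping.lookup b q = (\<Sum>i<Suc N. of_bool ((c(N := r)) i = q))" for q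
  proof -
    have "(\<Sum>i<N. of_bool ((c(N := r)) i = q)) = (\<Sum>i<N. of_bool (c i = q) :: nat)"
      by (intro sum.cong) auto
    then show ?thesis using c(2)[rule_format, of q] br
      by (cases "q = r") (auto simp: lookup_minus lookup_single_not_eq)
  qed
  moreover have "\<forall>i<Suc N. (c(N := r)) i \<in> S i" using c(1) r(1) by (auto simp: less_Suc_eq)
  ultimately show ?case by blast
qed

lemma inv_count_window_le_covers_inside:
  assumes us: "us \<in> chains k w"
    and I: "\<And>i. i < len k w \<Longrightarrow> covers_by k (us ! i) (us ! Suc i) (fst (I i)) (snd (I i))"
  shows "inv_count {s..c} w \<le> (\<Sum>i<len k w. of_bool (s \<le> fst (I i) \<and> snd (I i) \<le> c))"
proof -
  have "inv_count {s..c} (us ! q) \<le> (\<Sum>i<q. of_bool (s \<le> fst (I i) \<and> snd (I i) \<le> c))"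
    if "q \<le> len k w" for q
    using that
  proof (induction q)
    case 0
    have "us ! 0 = (\<lambda>x. x)" using us by (simp add: chains_def id_def)
    then show ?case by (simp add: inv_count_id)
  next
    case (Suc q)
    have "inv_count {s..c} (us ! Suc q)
        \<le> inv_count {s..c} (us ! q) + of_bool (s \<le> fst (I q) \<and> snd (I q) \<le> c)"
      using Suc.prems chain_permutes[OF us, of q] I[of q]
      by (intro inv_count_window_covers_by[of _ k]) auto
    moreover have "inv_count {s..c} (us ! q) \<le> (\<Sum>i<q. of_bool (s \<le> fst (I i) \<and> snd (I i) \<le> c))"
      using Suc by simp
    ultimately show ?case by (simp del: sum_of_bool_eq)
  qed
  from this[of "len k w"] show ?thesis using us by (simp add: chains_def)
qed

text \<open>Each cover u \<rightarrow> u \<circ> (n m) of the chain contributes to the monomial one variable v_r with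
  n \<le> r < m; it lies inside [s, t+1] only if r \<in> [s, t].\<close>
lemma K_le_if_coeff_chain_weight_nonzero:
  assumes us: "us \<in> chains k w" and nz: "coeff (chain_weight k w us) b \<noteq> 0"
    and st: "1 \<le> s" "t + 1 \<le> k"
  shows "K k w s t \<le> (\<Sum>i\<in>{s..t}. Poly_Mapping.lookup b i)"
proof -
  let ?l = "len k w"
  have "\<exists>p. covers_by k (us ! i) (us ! Suc i) (fst p) (snd p)
      \<and> cover_weight k (us ! i) (us ! Suc i) = Lf p" if i: "i < ?l" for i
  proof -
    obtain n m where "covers_by k (us ! i) (us ! Suc i) n m"
      "cover_weight k (us ! i) (us ! Suc i) = Lf (n, m)"
      by (rule chain_step[OF us i])
    then show ?thesis by (intro exI[of _ "(n, m)"]) simp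
  qed
  then obtain I where I: "\<And>i. i < ?l \<Longrightarrow> covers_by k (us ! i) (us ! Suc i) (fst (I i)) (snd (I i))"
    "\<And>i. i < ?l \<Longrightarrow> cover_weight k (us ! i) (us ! Suc i) = Lf (I i)"
    by metis
  have "chain_weight k w us = (\<Prod>i<?l. \<Sum>r\<in>{fst (I i)..<snd (I i)}. var r)"
    unfolding chain_weight_def by (intro prod.cong refl) (simp add: I(2) Lf_def)
  with nz have "coeff (\<Prod>i<?l. \<Sum>r\<in>{fst (I i)..<snd (I i)}. var r) b \<noteq> 0" by simp
  from coeff_prod_sum_var_nonzero_imp_choice[OF this] obtain c
    where c: "\<forall>i<?l. c i \<in> {fst (I i)..<snd (I i)}"
      "\<forall>q. Poly_Mapping.lookup b q = (\<Sum>i<?l. of_bool (c i = q))"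
    by blast
  have "int (K k w s t) = inv_count {s..t+1} w"
    using K_eq_inv_count[OF st] .
  also have "\<dots> \<le> (\<Sum>i<?l. of_bool (s \<le> fst (I i) \<and> snd (I i) \<le> t + 1))"
    using inv_count_window_le_covers_inside[OF us I(1)] .
  also have "\<dots> \<le> (\<Sum>i<?l. of_bool (c i \<in> {s..t}))"
    using c(1) by (intro sum_mono) fastforce
  also have "\<dots> = (\<Sum>q\<in>{s..t}. \<Sum>i<?l. of_bool (c i = q))"
    by (subst sum.swap) (simp add: of_bool_def sum.delta del: sum_of_bool_eq)
  also have "\<dots> = int (\<Sum>q\<in>{s..t}. Poly_Mapping.lookup b q)" using c(2) by (simp del: sum_of_bool_eq)
  finally show ?thesis by linarith
qed

lemma K_le_if_coeff_R_nonzero: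
  assumes "coeff (R k w) b \<noteq> 0" "1 \<le> s" "t + 1 \<le> k"
  shows "K k w s t \<le> (\<Sum>i\<in>{s..t}. Poly_Mapping.lookup b i)"
proof -
  have "(\<Sum>us\<in>chains k w. coeff (chain_weight k w us) b) \<noteq> 0"
    using assms(1) by (simp add: R_eq_sum_chain_weight coeff_def lookup_sum)
  then obtain us where "us \<in> chains k w" "coeff (chain_weight k w us) b \<noteq> 0"
    by (rule sum.not_neutral_contains_not_neutral)
  then show ?thesis using K_le_if_coeff_chain_weight_nonzero assms(2,3) by blast
qed

section \<open>A chain of weight L_w\<close>

lemma finite_inversions: "finite (inversions k u)"
  by (rule finite_subset[of _ "{1..k} \<times> {1..k}"]) (auto simp: inversions_def)

lemma permutes_eq_id_if_no_inversions:
  assumes perm: "w permutes {1..k}" and "inversions k w = {}"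
  shows "w = id"
proof (rule ccontr)
  assume "w \<noteq> id"
  then have ex: "\<exists>x. w x \<noteq> x" by (auto simp: fun_eq_iff)
  define x where "x = (LEAST x. w x \<noteq> x)"
  have wx: "w x \<noteq> x" unfolding x_def using ex by (rule LeastI_ex)
  have fixed: "w y = y" if "y < x" for y using not_less_Least[of y "\<lambda>x. w x \<noteq> x"] that x_def by auto
  have x: "x \<in> {1..k}" using wx permutes_not_in[OF perm] by blast
  have "x < w x"
  proof (rule ccontr)
    assume "\<not> x < w x"
    then have "w (w x) = w x" using wx fixed by simp
    then show False using wx permutes_inj[OF perm] by (auto dest: injD)
  qed
  obtain p where p: "w p = x" using permutes_surj[OF perm] by (metis surjD)
  have "x < p" using p wx fixed by (metis linorder_neqE_nat)
  moreover have "p \<in> {1..k}" using p x permutes_in_image[OF perm, of p] by simp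
  ultimately have "(x, p) \<in> inversions k w" using x \<open>x < w x\<close> p by (auto simp: inversions_def)
  with assms(2) show False by blast
qed

text \<open>Descend on w i - w j: the position carrying the value w j + 1 forms an inversion with
  i or with j whose value difference is smaller.\<close>
lemma inversion_with_adjacent_values:
  assumes perm: "w permutes {1..k}" and "inversions k w \<noteq> {}"
  shows "\<exists>n m. (n, m) \<in> inversions k w \<and> w n = w m + 1"
proof -
  obtain i j where ij: "(i, j) \<in> inversions k w" using assms(2) by auto
  have "\<exists>n m. (n, m) \<in> inversions k w \<and> w n = w m + 1"
    if "(i, j) \<in> inversions k w" "w i - w j = d" for i j d
    using that
  proof (induction d arbitrary: i j rule: less_induct)
    case (less d)
    have ij: "1 \<le> i" "i < j" "j \<le> k" "w j < w i" using less.prems by (auto simp: inversions_def)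
    show ?case
    proof (cases "w i = w j + 1")
      case True
      then show ?thesis using less.prems by blast
    next
      case False
      obtain p where p: "w p = w j + 1" using permutes_surj[OF perm] by (metis surjD)
      have "w i \<in> {1..k}" using permutes_in_image[OF perm, of i] ij by simp
      then have p_range: "p \<in> {1..k}" using p ij False permutes_in_image[OF perm, of p] by auto
      have "p \<noteq> j" using p by auto
      then consider "p < j" | "j < p" by linarith
      then show ?thesis
      proof cases
        case 1
        then have "(p, j) \<in> inversions k w" using p_range ij p by (auto simp: inversions_def)
        moreover have "w p - w j < d" using less.prems(2) p ij False by auto
        ultimately show ?thesis using less.IH by blast
      next
        case 2
        then have "(i, p) \<in> inversions k w" using p_range ij p False by (auto simp: inversions_def)
        moreover have "w i - w p < d" using less.prems(2) p ij False by auto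
        ultimately show ?thesis using less.IH by blast
      qed
    qed
  qed
  then show ?thesis using ij by blast
qed

lemma inversions_swap_adjacent_values:
  assumes perm: "w permutes {1..k}" and "n < m" and adj: "w n = w m + 1"
  shows "inversions k (swap_pos w n m) = inversions k w - {(n, m)}"
proof -
  have inj: "inj w" using permutes_inj[OF perm] .
  have dn: "w x \<noteq> w n" if "x \<noteq> n" for x using inj that by (auto dest: injD)
  have dm: "w x \<noteq> w m" if "x \<noteq> m" for x using inj that by (auto dest: injD)
  have same_side: "(w x < w n) = (w x < w m) \<and> (w n < w x) = (w m < w x)" if "x \<noteq> n" "x \<noteq> m" for x
    using dn[OF that(1)] dm[OF that(2)] adj by auto
  show ?thesis
  proof (intro set_eqI, clarify)
    fix i j
    show "((i, j) \<in> inversions k (swap_pos w n m)) = ((i, j) \<in> inversions k w - {(n, m)})"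
      unfolding inversions_def swap_pos_def
      using assms(2) adj same_side[of i] same_side[of j] dn dm
      by (cases "i = n"; cases "i = m"; cases "j = n"; cases "j = m") auto
  qed
qed

lemma chain_snoc:
  assumes us: "us \<in> chains k u" and cov: "covers k u u'"
  shows "us @ [u'] \<in> chains k u'"
    and "chain_weight k u' (us @ [u']) = chain_weight k u us * cover_weight k u u'"
proof -
  have l: "len k u' = Suc (len k u)" using cov by (auto simp: covers_def covers_by_def)
  have length: "length us = Suc (len k u)" using us by (simp add: chains_def)
  have nth: "(us @ [u']) ! i = us ! i" if "i \<le> len k u" for i
    using that length by (simp add: nth_append)
  have last: "(us @ [u']) ! Suc (len k u) = u'" using length by (simp add: nth_append)
  have "covers k ((us @ [u']) ! i) ((us @ [u']) ! Suc i)" if "i < len k u'" for i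
  proof (cases "i < len k u")
    case True
    then show ?thesis using us nth[of i] nth[of "Suc i"] by (simp add: chains_def)
  next
    case False
    then have "i = len k u" using that l by simp
    then show ?thesis using us nth[of i] last cov by (simp add: chains_def)
  qed
  then show "us @ [u'] \<in> chains k u'"
    using us length l nth[of 0] last by (simp add: chains_def)
  show "chain_weight k u' (us @ [u']) = chain_weight k u us * cover_weight k u u'"
    using us nth last unfolding chain_weight_def l
    by (simp add: chains_def del: append.simps)
qed

lemma chain_with_weight_Lw:
  assumes "w permutes {1..k}"
  shows "\<exists>us\<in>chains k w. chain_weight k w us = Lw k w"
  using assms
proof (induction "len k w" arbitrary: w)
  case 0
  then have "inversions k w = {}" using finite_inversions[of k w] by (simp add: len_def)
  then have "w = id" "Lw k w = 1" using permutes_eq_id_if_no_inversions[OF "0.prems"] by (auto simp: Lw_def)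
  then have "[id] \<in> chains k w" "chain_weight k w [id] = Lw k w"
    using "0.hyps"[symmetric] by (simp_all add: chains_def chain_weight_def id_def)
  then show ?case by blast
next
  case (Suc l)
  have "inversions k w \<noteq> {}" using Suc.hyps(2) by (auto simp: len_def)
  then obtain n m where nm: "(n, m) \<in> inversions k w" "w n = w m + 1"
    using inversion_with_adjacent_values[OF Suc.prems] by blast
  then have range: "1 \<le> n" "n < m" "m \<le> k" by (auto simp: inversions_def)
  define w' where "w' = swap_pos w n m"
  have perm': "w' permutes {1..k}" using swap_pos_permutes[OF Suc.prems range] by (simp add: w'_def)
  have inv': "inversions k w' = inversions k w - {(n, m)}"
    using inversions_swap_adjacent_values[OF Suc.prems range(2) nm(2)] by (simp add: w'_def)
  then have len': "len k w = len k w' + 1"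
    using Suc.hyps(2) nm(1) finite_inversions[of k w] by (simp add: len_def)
  have undo: "swap_pos w' n m = w" by (simp add: w'_def swap_pos_def comp_assoc)
  have cov: "covers_by k w' w n m" using range undo len' by (simp add: covers_by_def)
  obtain us' where us': "us' \<in> chains k w'" "chain_weight k w' us' = Lw k w'"
    using Suc.hyps(1)[OF _ perm'] len' Suc.hyps(2) by auto
  have "Lw k w = Lw k w' * Lf (n, m)"
    unfolding Lw_def inv' using prod.remove[OF finite_inversions nm(1), of Lf] by (simp add: mult.commute)
  moreover have "covers k w' w" using cov by (auto simp: covers_def)
  ultimately have "chain_weight k w (us' @ [w]) = Lw k w" "us' @ [w] \<in> chains k w"
    using chain_snoc[OF us'(1)] us'(2) cover_weight_eq[OF perm' cov] by simp_all
  then show ?case by blast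
qed

lemma coeff_R_nonzero_if_coeff_Lw_nonzero:
  assumes "w permutes {1..k}" and "coeff (Lw k w) b \<noteq> 0"
  shows "coeff (R k w) b \<noteq> 0"
proof -
  obtain us where us: "us \<in> chains k w" "chain_weight k w us = Lw k w"
    using chain_with_weight_Lw[OF assms(1)] by blast
  then have "0 < coeff (chain_weight k w us) b"
    using assms(2) nonneg_coeffs_chain_weight[OF us(1)] by (simp add: nonneg_coeffs_def order_le_neq_trans)
  also have "\<dots> \<le> coeff (R k w) b"
    unfolding R_eq_sum_chain_weight using us(1) finite_chains nonneg_coeffs_chain_weight
    by (intro coeff_le_coeff_sum)
  finally show ?thesis by simp
qed

section \<open>Sufficiency of the window inequalities\<close>

definition window :: "(nat \<times> nat) set \<Rightarrow> nat \<Rightarrow> nat \<Rightarrow> (nat \<times> nat) set" where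
  "window F s t = {f \<in> F. s \<le> fst f \<and> snd f \<le> Suc t}"

text \<open>Hall's condition for choosing, for every interval f = (i, j) of F, a variable v_r with
  i \<le> r < j, such that each v_q is chosen exactly b_q times.\<close>
definition hall_condition :: "(nat \<times> nat) set \<Rightarrow> (nat \<Rightarrow>\<^sub>0 nat) \<Rightarrow> bool" where
  "hall_condition F b \<longleftrightarrow> (\<forall>s t. card (window F s t) \<le> (\<Sum>q\<in>{s..t}. Poly_Mapping.lookup b q))"

lemma sum_atLeastAtMost_split:
  fixes g :: "nat \<Rightarrow> 'a::comm_monoid_add"
  assumes "a \<le> Suc r" "r \<le> t"
  shows "sum g {a..t} = sum g {a..r} + sum g {Suc r..t}"
proof -
  have "{a..t} = {a..r} \<union> {Suc r..t}" using assms by auto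
  then show ?thesis by (simp add: sum.union_disjoint)
qed

lemma finite_window: "finite F \<Longrightarrow> finite (window F s t)"
  by (simp add: window_def)

lemma coeff_prod_Lf_remove_le:
  assumes "finite F" "f0 \<in> F" "fst f0 \<le> r" "r < snd f0" "Poly_Mapping.lookup b r \<noteq> 0"
  shows "coeff (\<Prod>f\<in>F - {f0}. Lf f) (b - Poly_Mapping.single r 1) \<le> coeff (\<Prod>f\<in>F. Lf f) b"
proof -
  let ?P = "\<Prod>f\<in>F - {f0}. Lf f"
  have "nonneg_coeffs (var q * ?P)" for q
    by (intro nonneg_coeffs_mult nonneg_coeffs_var nonneg_coeffs_prod nonneg_coeffs_Lf)
  then have "coeff (var r * ?P) b \<le> coeff (\<Sum>q\<in>{fst f0..<snd f0}. var q * ?P) b"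
    using assms(3,4) by (intro coeff_le_coeff_sum) auto
  also have "(\<Sum>q\<in>{fst f0..<snd f0}. var q * ?P) = (\<Prod>f\<in>F. Lf f)"
    using prod.remove[OF assms(1,2), of Lf] by (simp add: Lf_def sum_distrib_right)
  finally show ?thesis using coeff_var_mult[OF assms(5)] by simp
qed

lemma hall_conditionD: "hall_condition F b \<Longrightarrow> card (window F s t) \<le> (\<Sum>q\<in>{s..t}. Poly_Mapping.lookup b q)"
  by (simp add: hall_condition_def)

lemma hall_condition_first_var_lt_snd:
  assumes "finite F" "hall_condition F b" "\<And>q. q < r \<Longrightarrow> Poly_Mapping.lookup b q = 0"
    "f \<in> F" "fst f < snd f"
  shows "r < snd f"
proof (rule ccontr)
  assume "\<not> r < snd f"
  then have "(\<Sum>q\<in>{0..snd f - 1}. Poly_Mapping.lookup b q) = 0" using assms(3,5) by auto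
  moreover have "f \<in> window F 0 (snd f - 1)" using assms(4,5) by (auto simp: window_def)
  then have "card (window F 0 (snd f - 1)) \<noteq> 0" using finite_window[OF assms(1)] by auto
  ultimately show False using hall_conditionD[OF assms(2), of 0 "snd f - 1"] by simp
qed

lemma hall_condition_first_var_covered:
  assumes "hall_condition F b" "\<forall>f\<in>F. snd f \<le> Suc T"
    "(\<Sum>q\<in>{0..T}. Poly_Mapping.lookup b q) = card F" "r \<le> T" "Poly_Mapping.lookup b r \<noteq> 0"
  shows "\<exists>f\<in>F. fst f \<le> r"
proof (rule ccontr)
  let ?b = "Poly_Mapping.lookup b"
  assume "\<not> (\<exists>f\<in>F. fst f \<le> r)"
  then have "window F (Suc r) T = F" using assms(2) by (force simp: window_def)
  then have "card F \<le> (\<Sum>q\<in>{Suc r..T}. ?b q)" using hall_conditionD[OF assms(1), of "Suc r" T] by simp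
  moreover have "(\<Sum>q\<in>{0..T}. ?b q) = (\<Sum>q\<in>{0..r}. ?b q) + (\<Sum>q\<in>{Suc r..T}. ?b q)"
    using assms(4) by (intro sum_atLeastAtMost_split) auto
  moreover have "?b r \<le> (\<Sum>q\<in>{0..r}. ?b q)" by (intro member_le_sum) auto
  ultimately show False using assms(3,5) by simp
qed

text \<open>The greedy step: v_r, the first variable occurring in b, is given to the interval f0
  that ends first among those containing r.\<close>
lemma card_window_remove_less:
  assumes fin: "finite F" and hall: "hall_condition F b"
    and r: "Poly_Mapping.lookup b r \<noteq> 0" "\<And>q. q < r \<Longrightarrow> Poly_Mapping.lookup b q = 0"
    and f0: "f0 \<in> F" and first_end: "\<And>f. f \<in> F \<Longrightarrow> fst f \<le> r \<Longrightarrow> snd f0 \<le> snd f"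
    and "s \<le> r" "r \<le> t"
  shows "card (window (F - {f0}) s t) < (\<Sum>q\<in>{s..t}. Poly_Mapping.lookup b q)"
proof -
  let ?b = "Poly_Mapping.lookup b"
  have "(\<Sum>q\<in>{0..t}. ?b q) = (\<Sum>q\<in>{s..t}. ?b q)"
    using r(2) \<open>s \<le> r\<close> by (intro sum.mono_neutral_right) auto
  moreover have "card (window (F - {f0}) s t) < (\<Sum>q\<in>{0..t}. ?b q)"
  proof (cases "snd f0 \<le> Suc t")
    case True
    have "window (F - {f0}) s t \<subseteq> window F 0 t - {f0}" by (auto simp: window_def)
    moreover have "f0 \<in> window F 0 t" using f0 True by (simp add: window_def)
    ultimately have "card (window (F - {f0}) s t) < card (window F 0 t)"
      using finite_window[OF fin] by (meson card_mono finite_Diff card_Diff1_less le_less_trans)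
    then show ?thesis using hall_conditionD[OF hall, of 0 t] by simp
  next
    case False
    have "window (F - {f0}) s t \<subseteq> window F (Suc r) t"
      using first_end False by (fastforce simp: window_def)
    then have "card (window (F - {f0}) s t) \<le> (\<Sum>q\<in>{Suc r..t}. ?b q)"
      using finite_window[OF fin] hall_conditionD[OF hall, of "Suc r" t] by (meson card_mono order_trans)
    moreover have "(\<Sum>q\<in>{0..t}. ?b q) = (\<Sum>q\<in>{0..r}. ?b q) + (\<Sum>q\<in>{Suc r..t}. ?b q)"
      using \<open>r \<le> t\<close> by (intro sum_atLeastAtMost_split) auto
    moreover have "?b r \<le> (\<Sum>q\<in>{0..r}. ?b q)" by (intro member_le_sum) auto
    ultimately show ?thesis using r(1) by simp
  qed
  ultimately show ?thesis by simp
qed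

lemma hall_condition_remove:
  assumes fin: "finite F" and hall: "hall_condition F b"
    and r: "Poly_Mapping.lookup b r \<noteq> 0" "\<And>q. q < r \<Longrightarrow> Poly_Mapping.lookup b q = 0"
    and f0: "f0 \<in> F" and first_end: "\<And>f. f \<in> F \<Longrightarrow> fst f \<le> r \<Longrightarrow> snd f0 \<le> snd f"
  shows "hall_condition (F - {f0}) (b - Poly_Mapping.single r 1)"
  unfolding hall_condition_def
proof (intro allI)
  fix s t
  have sums: "(\<Sum>q\<in>{s..t}. Poly_Mapping.lookup b q)
      = (\<Sum>q\<in>{s..t}. Poly_Mapping.lookup (b - Poly_Mapping.single r 1) q) + (if r \<in> {s..t} then 1 else 0)"
    using lookup_minus_single_sum[OF r(1)] by simp
  show "card (window (F - {f0}) s t) \<le> (\<Sum>q\<in>{s..t}. Poly_Mapping.lookup (b - Poly_Mapping.single r 1) q)"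
  proof (cases "r \<in> {s..t}")
    case False
    have "window (F - {f0}) s t \<subseteq> window F s t" by (auto simp: window_def)
    then have "card (window (F - {f0}) s t) \<le> card (window F s t)"
      by (intro card_mono finite_window fin)
    moreover have "(\<Sum>q\<in>{s..t}. Poly_Mapping.lookup b q)
        = (\<Sum>q\<in>{s..t}. Poly_Mapping.lookup (b - Poly_Mapping.single r 1) q)"
      using False sums by simp
    ultimately show ?thesis using hall_conditionD[OF hall, of s t] by simp
  next
    case True
    then have "card (window (F - {f0}) s t) < (\<Sum>q\<in>{s..t}. Poly_Mapping.lookup b q)"
      by (intro card_window_remove_less[OF assms]) auto
    then show ?thesis using sums True by simp
  qed
qed

lemma hall_greedy_step:
  assumes fin: "finite F" and intervals: "\<forall>f\<in>F. fst f < snd f \<and> snd f \<le> Suc T"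
    and keys: "Poly_Mapping.keys b \<subseteq> {..T}" and total: "(\<Sum>q\<in>{0..T}. Poly_Mapping.lookup b q) = card F"
    and hall: "hall_condition F b" and "F \<noteq> {}"
  obtains f0 r where "f0 \<in> F" "fst f0 \<le> r" "r < snd f0" "Poly_Mapping.lookup b r \<noteq> 0"
    "hall_condition (F - {f0}) (b - Poly_Mapping.single r 1)"
proof -
  have "Poly_Mapping.keys b \<noteq> {}" using total \<open>F \<noteq> {}\<close> fin by (auto simp: in_keys_iff)
  define r where "r = Min (Poly_Mapping.keys b)"
  have "r \<in> Poly_Mapping.keys b" using \<open>Poly_Mapping.keys b \<noteq> {}\<close> by (simp add: r_def)
  then have br: "Poly_Mapping.lookup b r \<noteq> 0" and "r \<le> T" using keys by (auto simp only: in_keys_iff)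
  have below: "Poly_Mapping.lookup b q = 0" if "q < r" for q
  proof (rule ccontr)
    assume "Poly_Mapping.lookup b q \<noteq> 0"
    then have "r \<le> q" unfolding r_def by (simp add: in_keys_iff)
    with that show False by simp
  qed
  define G where "G = {f \<in> F. fst f \<le> r}"
  have "G \<noteq> {}" "finite G"
    using hall_condition_first_var_covered[OF hall _ total \<open>r \<le> T\<close> br] intervals fin
    by (auto simp: G_def)
  then obtain f0 where f0: "f0 \<in> G" "snd f0 = Min (snd ` G)"
    using Min_in[of "snd ` G"] by (metis (no_types, lifting) finite_imageI image_iff image_is_empty)
  then have "f0 \<in> F" "fst f0 \<le> r" by (simp_all add: G_def)
  moreover have "r < snd f0"
    using hall_condition_first_var_lt_snd[OF fin hall below \<open>f0 \<in> F\<close>] intervals \<open>f0 \<in> F\<close> by blast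
  moreover have "hall_condition (F - {f0}) (b - Poly_Mapping.single r 1)"
    using fin hall br below \<open>f0 \<in> F\<close> f0(2) \<open>finite G\<close>
    by (intro hall_condition_remove) (auto simp: G_def)
  ultimately show thesis using that br by blast
qed

lemma coeff_prod_Lf_pos_if_hall_condition:
  assumes "finite F" "\<forall>f\<in>F. fst f < snd f \<and> snd f \<le> Suc T"
    "Poly_Mapping.keys b \<subseteq> {..T}" "(\<Sum>q\<in>{0..T}. Poly_Mapping.lookup b q) = card F"
    "hall_condition F b"
  shows "0 < coeff (\<Prod>f\<in>F. Lf f) b"
  using assms
proof (induction "card F" arbitrary: F b)
  case 0
  then have "F = {}" "\<forall>q\<in>{0..T}. Poly_Mapping.lookup b q = 0" by simp_all
  moreover from this have "b = 0" using "0.prems"(3) by (intro poly_mapping_eqI) (auto simp: in_keys_iff)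
  ultimately show ?case by (simp add: coeff_def lookup_one)
next
  case (Suc N)
  have "F \<noteq> {}" using Suc.hyps(2) by auto
  obtain f0 r where f0: "f0 \<in> F" "fst f0 \<le> r" "r < snd f0" and br: "Poly_Mapping.lookup b r \<noteq> 0"
    and hall: "hall_condition (F - {f0}) (b - Poly_Mapping.single r 1)"
    by (rule hall_greedy_step[OF Suc.prems \<open>F \<noteq> {}\<close>])
  have "Poly_Mapping.keys (b - Poly_Mapping.single r 1) \<subseteq> Poly_Mapping.keys b"
    by (auto simp: in_keys_iff lookup_minus)
  moreover have "r \<in> Poly_Mapping.keys b" using br by (simp add: in_keys_iff)
  then have "r \<le> T" using Suc.prems(3) by auto
  then have "(\<Sum>q\<in>{0..T}. Poly_Mapping.lookup (b - Poly_Mapping.single r 1) q) + 1 = card F"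
    using lookup_minus_single_sum[OF br, of "{0..T}"] Suc.prems(4) by simp
  then have "(\<Sum>q\<in>{0..T}. Poly_Mapping.lookup (b - Poly_Mapping.single r 1) q) = card (F - {f0})"
    using f0(1) Suc.prems(1) by (simp add: card_Diff_singleton)
  ultimately have "0 < coeff (\<Prod>f\<in>F - {f0}. Lf f) (b - Poly_Mapping.single r 1)"
    using Suc hall f0(1) by (intro Suc.hyps(1)) (auto simp: card_Diff_singleton)
  also have "\<dots> \<le> coeff (\<Prod>f\<in>F. Lf f) b"
    using Suc.prems(1) f0 br by (rule coeff_prod_Lf_remove_le)
  finally show ?case .
qed

lemma K_eq_card_window: "K k w s t = card (window (inversions k w) s t)"
  unfolding K_def window_def by (intro arg_cong[where f = card]) auto

lemma hall_condition_inversions_if_K_le: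
  assumes "\<forall>s t. 1 \<le> s \<longrightarrow> s \<le> t \<longrightarrow> t \<le> k - 1 \<longrightarrow>
             K k w s t \<le> (\<Sum>i\<in>{s..t}. Poly_Mapping.lookup b i)"
  shows "hall_condition (inversions k w) b"
  unfolding hall_condition_def
proof (intro allI)
  fix s t :: nat
  \<comment> \<open>inversions lie in [1, k], so only the window [max s 1, min t (k-1)] matters\<close>
  define s' where "s' = max s 1"
  define t' where "t' = min t (k - 1)"
  have window: "window (inversions k w) s t = window (inversions k w) s' t'"
    by (auto simp: inversions_def window_def s'_def t'_def)
  show "card (window (inversions k w) s t) \<le> (\<Sum>q\<in>{s..t}. Poly_Mapping.lookup b q)"
  proof (cases "s' \<le> t'")
    case False
    then have "window (inversions k w) s' t' = {}" by (auto simp: inversions_def window_def)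
    then show ?thesis using window by simp
  next
    case True
    have "card (window (inversions k w) s t) = K k w s' t'"
      using window by (simp add: K_eq_card_window)
    also have "\<dots> \<le> (\<Sum>q\<in>{s'..t'}. Poly_Mapping.lookup b q)"
      using assms True by (auto simp: s'_def t'_def)
    also have "\<dots> \<le> (\<Sum>q\<in>{s..t}. Poly_Mapping.lookup b q)"
      by (intro sum_mono2) (auto simp: s'_def t'_def)
    finally show ?thesis .
  qed
qed

lemma coeff_Lw_pos_if_K_le:
  assumes keys: "Poly_Mapping.keys b \<subseteq> {1..k-1}"
    and total: "(\<Sum>i\<in>{1..k-1}. Poly_Mapping.lookup b i) = len k w"
    and K_le: "\<forall>s t. 1 \<le> s \<longrightarrow> s \<le> t \<longrightarrow> t \<le> k - 1 \<longrightarrow>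
                 K k w s t \<le> (\<Sum>i\<in>{s..t}. Poly_Mapping.lookup b i)"
  shows "0 < coeff (Lw k w) b"
  unfolding Lw_def
proof (rule coeff_prod_Lf_pos_if_hall_condition[where T = "k - 1"])
  show "finite (inversions k w)" by (rule finite_inversions)
  show "\<forall>f\<in>inversions k w. fst f < snd f \<and> snd f \<le> Suc (k - 1)"
    by (auto simp: inversions_def)
  show "Poly_Mapping.keys b \<subseteq> {..k - 1}" using keys by auto
  have "Poly_Mapping.lookup b 0 = 0" using keys by (auto simp: in_keys_iff)
  moreover have "{0..k-1} = insert 0 {1..k-1}" by auto
  ultimately show "(\<Sum>q\<in>{0..k - 1}. Poly_Mapping.lookup b q) = card (inversions k w)"
    using total by (simp add: len_def)
  show "hall_condition (inversions k w) b" using K_le by (rule hall_condition_inversions_if_K_le)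
qed

theorem mainTheorem10:
  fixes k :: nat and w :: "nat \<Rightarrow> nat" and b :: "nat \<Rightarrow>\<^sub>0 nat"
  assumes "k \<ge> 2"
    and "w permutes {1..k}"
    and "Poly_Mapping.keys b \<subseteq> {1..k-1}"
    and "(\<Sum>i\<in>{1..k-1}. Poly_Mapping.lookup b i) = len k w"
  shows "(coeff (R k w) b \<noteq> 0 \<longleftrightarrow> coeff (Lw k w) b \<noteq> 0)
       \<and> (coeff (R k w) b \<noteq> 0 \<longleftrightarrow>
            (\<forall>s t. 1 \<le> s \<longrightarrow> s \<le> t \<longrightarrow> t \<le> k - 1 \<longrightarrow>
               (\<Sum>i\<in>{s..t}. Poly_Mapping.lookup b i) \<ge> K k w s t))"
proof -
  let ?windows = "\<forall>s t. 1 \<le> s \<longrightarrow> s \<le> t \<longrightarrow> t \<le> k - 1 \<longrightarrow>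
                    (\<Sum>i\<in>{s..t}. Poly_Mapping.lookup b i) \<ge> K k w s t"
  have "coeff (R k w) b \<noteq> 0 \<Longrightarrow> ?windows"
    using K_le_if_coeff_R_nonzero assms(1) by auto
  moreover have "?windows \<Longrightarrow> coeff (Lw k w) b \<noteq> 0"
    using coeff_Lw_pos_if_K_le[OF assms(3,4)] by force
  moreover have "coeff (Lw k w) b \<noteq> 0 \<Longrightarrow> coeff (R k w) b \<noteq> 0"
    by (rule coeff_R_nonzero_if_coeff_Lw_nonzero[OF assms(2)])
  ultimately show ?thesis by blast
qed

end
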